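(* Let $S$ be of the form $S_t=\sum_{-r<s\le t}(\Delta L_s)^2$ with $\mathbb E[L_1^4]<\infty$, and let $X$ be the unique solution to $dX_t=(\eta-c_\mu X_t+\xi(X)_t)\,dt+c_\nu X_{t-}\,dS_t$, $t\ge0$, where $\xi(X)_t=\int_{-p}^0 f_\mu(u)X_{t+u}\,du+\int_{-q+}^0 f_\nu(u)X_{t+u-}\,dS_{t+u}$. Suppose $\eta>0$, $c_\mu>\|f_\mu\|_{L^1}$ and $X_u\ge x^-:=\eta/(c_\mu-\|f_\mu\|_{L^1})$ for all $u\in[-r,0]$. Then for each $t>0$, $X_t\ge x^-$ almost surely; in particular $X_t$ is positive and bounded away from zero by $x^-$.
   Context: Let $p,q\ge0$, $r:=p\vee q$, $(\Omega,\mathcal F,\mathbb F=(\mathcal F_t)_{t\ge-r},\mathbb P)$ a filtered probability space with the usual conditions, and $(L_t)_{t\ge-r}$ a càdlàg adapted centered Lévy process with $L_{-r}=0$ and increments independent of the past and stationary. Parameters: $c_\nu>0$, $f_\mu,f_\nu$ nonnegative continuous functions supported on $[-p,0]$ and $[-q,0]$. The initial condition $X=\Phi$ on $[-r,0]$ is a càdlàg process adapted to the natural filtration of $L$ with $\mathbb E[\sup_{[-r,0]}|\Phi|^2]<\infty$; the solution is the unique adapted càdlàg process with $\mathbb E[\sup_{s\in[-r,t]}|X_s|^2]<\infty$ for all $t$. *)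

theory Defs
  imports "HOL-Probability.Probability"
begin

definition left_lim :: "(real \<Rightarrow> real) \<Rightarrow> real \<Rightarrow> real" where
  "left_lim f t = Lim (at_left t) f"

definition jump :: "(real \<Rightarrow> real) \<Rightarrow> real \<Rightarrow> real" where
  "jump f t = f t - left_lim f t"

definition cadlag_from :: "real \<Rightarrow> (real \<Rightarrow> real) \<Rightarrow> bool" where
  "cadlag_from a f \<longleftrightarrow>
     (\<forall>t\<ge>a. continuous (at_right t) f \<and> (t > a \<longrightarrow> (\<exists>l. (f \<longlongrightarrow> l) (at_left t))))"

definition sq_jump_sum :: "real \<Rightarrow> (real \<Rightarrow> real) \<Rightarrow> real \<Rightarrow> real" where
  "sq_jump_sum a l t = infsum (\<lambda>s. (jump l s)\<^sup>2) {a<..t}"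

definition stieltjes_int :: "(real \<Rightarrow> real) \<Rightarrow> real \<Rightarrow> real \<Rightarrow> (real \<Rightarrow> real) \<Rightarrow> real" where
  "stieltjes_int S a b g = set_lebesgue_integral (interval_measure S) {a<..b} g"

definition usual_filtration :: "'a measure \<Rightarrow> (real \<Rightarrow> 'a measure) \<Rightarrow> real \<Rightarrow> bool" where
  "usual_filtration M F a \<longleftrightarrow>
     (\<forall>t\<ge>a. subalgebra M (F t)) \<and>
     (\<forall>s t. a \<le> s \<longrightarrow> s \<le> t \<longrightarrow> sets (F s) \<subseteq> sets (F t)) \<and>
     (\<forall>t\<ge>a. sets (F t) = (\<Inter>u\<in>{t<..}. sets (F u))) \<and>
     (\<forall>N. N \<subseteq> space M \<longrightarrow> (\<exists>A\<in>null_sets M. N \<subseteq> A) \<longrightarrow> N \<in> sets (F a))"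

definition adapted_proc :: "(real \<Rightarrow> 'a measure) \<Rightarrow> real \<Rightarrow> ('a \<Rightarrow> real \<Rightarrow> real) \<Rightarrow> bool" where
  "adapted_proc F a X \<longleftrightarrow> (\<forall>t\<ge>a. (\<lambda>\<omega>. X \<omega> t) \<in> borel_measurable (F t))"

definition levy_process :: "'a measure \<Rightarrow> (real \<Rightarrow> 'a measure) \<Rightarrow> real \<Rightarrow> ('a \<Rightarrow> real \<Rightarrow> real) \<Rightarrow> bool" where
  "levy_process M F a L \<longleftrightarrow>
     adapted_proc F a L \<and>
     (\<forall>\<omega>\<in>space M. L \<omega> a = 0 \<and> cadlag_from a (L \<omega>)) \<and>
     \<comment> \<open>increments independent of the past\<close>
     (\<forall>s t. a \<le> s \<longrightarrow> s \<le> t \<longrightarrow> (\<forall>A\<in>sets (F s). \<forall>B\<in>sets borel.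
        measure M (A \<inter> {\<omega>\<in>space M. L \<omega> t - L \<omega> s \<in> B}) =
        measure M A * measure M {\<omega>\<in>space M. L \<omega> t - L \<omega> s \<in> B})) \<and>
     \<comment> \<open>stationary increments\<close>
     (\<forall>s t. a \<le> s \<longrightarrow> s \<le> t \<longrightarrow>
        distr M borel (\<lambda>\<omega>. L \<omega> t - L \<omega> s) = distr M borel (\<lambda>\<omega>. L \<omega> (a + (t - s)) - L \<omega> a))"

definition centered_proc :: "'a measure \<Rightarrow> real \<Rightarrow> ('a \<Rightarrow> real \<Rightarrow> real) \<Rightarrow> bool" where
  "centered_proc M a L \<longleftrightarrow>
     (\<forall>t\<ge>a. integrable M (\<lambda>\<omega>. L \<omega> t) \<and> (\<integral>\<omega>. L \<omega> t \<partial>M) = 0)"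

definition nat_filtration :: "'a measure \<Rightarrow> ('a \<Rightarrow> real \<Rightarrow> real) \<Rightarrow> real \<Rightarrow> real \<Rightarrow> 'a measure" where
  "nat_filtration M L a u =
     sigma (space M) {(\<lambda>\<omega>. L \<omega> s) -` B \<inter> space M | s B. s \<in> {a..u} \<and> B \<in> sets borel}"

text \<open>xi(x)_s = int_{-p}^0 f_mu(u) x(s+u) du + int_{(-q,0]} f_nu(u) x((s+u)-) dS_{s+u},
  the second integral written after the substitution v = s+u as an integral over (s-q, s] w.r.t. dS_v.\<close>
definition xi_term :: "(real \<Rightarrow> real) \<Rightarrow> (real \<Rightarrow> real) \<Rightarrow> real \<Rightarrow> real \<Rightarrow> (real \<Rightarrow> real)
                       \<Rightarrow> (real \<Rightarrow> real) \<Rightarrow> real \<Rightarrow> real" where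
  "xi_term f_mu f_nu p q S x s =
     (LINT u:{-p..0}|lborel. f_mu u * x (s + u)) +
     stieltjes_int S (s - q) s (\<lambda>v. f_nu (v - s) * left_lim x v)"

definition solves_path :: "real \<Rightarrow> real \<Rightarrow> real \<Rightarrow> (real \<Rightarrow> real) \<Rightarrow> (real \<Rightarrow> real) \<Rightarrow> real \<Rightarrow> real
                          \<Rightarrow> (real \<Rightarrow> real) \<Rightarrow> (real \<Rightarrow> real) \<Rightarrow> bool" where
  "solves_path eta c_mu c_nu f_mu f_nu p q S x \<longleftrightarrow>
     (\<forall>t\<ge>0. x t = x 0 + (LINT s:{0..t}|lborel. eta - c_mu * x s + xi_term f_mu f_nu p q S x s)
                 + c_nu * stieltjes_int S 0 t (\<lambda>v. left_lim x v))"

end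

theory Submission
  imports Defs
begin

text \<open>The argument is pathwise. Put \<open>m = eta / (c_mu - K)\<close> with \<open>K = \<parallel>f_mu\<parallel>\<^sub>1\<close>, so that
  \<open>eta = (c_mu - K) m\<close>. The \<open>dS\<close>-terms are nonnegative as long as the left limits of \<open>X\<close> are,
  and if \<open>X \<ge> m - E\<close> on the delay window of \<open>u\<close> then the drift at \<open>u\<close> is at least
  \<open>c_mu (m - X u) - K E\<close>. Let \<open>tau\<close> be the first time \<open>X\<close> drops below \<open>m\<close>. Since the
  \<open>dS\<close>-integral is nonnegative and the \<open>dt\<close>-integral is continuous, \<open>X tau \<ge> m\<close>. Just after
  \<open>tau\<close>, right-continuity keeps \<open>X \<ge> m/2\<close> on some \<open>[tau, tau + d]\<close>; and if \<open>X \<ge> m - E\<close>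
  there, then integrating from the last time before \<open>t\<close> at which \<open>X \<ge> m\<close> shows
  \<open>X t \<ge> m - K E d \<ge> m - E/2\<close> once \<open>K d \<le> 1/2\<close>. Iterating, \<open>X \<ge> m\<close> on \<open>[tau, tau + d]\<close>,
  contradicting the choice of \<open>tau\<close>.\<close>

lemma emeasure_interval_measure_Ioc_finite:
  "emeasure (interval_measure F) {a<..b} < \<infinity>"
proof (cases "a \<le> b")
  case False
  then show ?thesis by simp
next
  case ab: True
  let ?I = "{(a::real, b). a \<le> b}" and ?G = "\<lambda>(a, b). {a<..b::real}"
    and ?m = "\<lambda>(a, b). ennreal (F b - F a)"
  \<comment> \<open>Without monotonicity of \<open>F\<close>, \<open>extend_measure\<close> may fall back to the zero measure.\<close>
  show ?thesis
  proof (cases "\<exists>\<mu>'. (\<forall>i\<in>?I. \<mu>' (?G i) = ?m i) \<and> measure_space UNIV (sigma_sets UNIV (?G`?I)) \<mu>'")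
    case True
    then obtain \<mu>' where \<mu>': "\<forall>i\<in>?I. \<mu>' (?G i) = ?m i"
      "measure_space UNIV (sigma_sets UNIV (?G`?I)) \<mu>'" by blast
    have sets: "sets (interval_measure F) = sigma_sets UNIV (?G`?I)"
      unfolding interval_measure_def by (rule sets_extend_measure) auto
    have "emeasure (interval_measure F) (?G (a, b)) = ?m (a, b)"
      by (rule emeasure_extend_measure[OF interval_measure_def])
        (use \<mu>' ab in \<open>unfold measure_space_def sets, auto\<close>)
    then show ?thesis by simp
  next
    case False
    then have "interval_measure F = measure_of UNIV (?G`?I) (\<lambda>_. 0)"
      unfolding interval_measure_def extend_measure_def by auto
    then show ?thesis by (simp add: emeasure_sigma)
  qed
qed

lemma sigma_finite_interval_measure_any: "sigma_finite_measure (interval_measure F)"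
proof
  show "\<exists>A. countable A \<and> A \<subseteq> sets (interval_measure F) \<and> \<Union> A = space (interval_measure F)
      \<and> (\<forall>a\<in>A. emeasure (interval_measure F) a \<noteq> \<infinity>)"
  proof (intro exI[of _ "range (\<lambda>n::nat. {-real n<..real n})"] conjI)
    show "\<Union> (range (\<lambda>n::nat. {-real n<..real n})) = space (interval_measure F)"
    proof (auto simp: space_interval_measure)
      fix t :: real
      obtain n :: nat where "\<bar>t\<bar> < real n" using reals_Archimedean2 by blast
      then show "\<exists>n. - real n < t \<and> t \<le> real n" by (intro exI[of _ n]) auto
    qed
  qed (use emeasure_interval_measure_Ioc_finite in \<open>auto simp: less_top\<close>)
qed

text \<open>A right-continuous function is the pointwise limit of the step functions that sample it
  at the grid points \<open>\<lceil>n t\<rceil> / n \<ge> t\<close>.\<close>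

lemma borel_measurable_continuous_from_right:
  fixes f :: "real \<Rightarrow> real"
  assumes rc: "\<And>t. continuous (at_right t) f"
  shows "f \<in> borel_measurable borel"
proof (rule borel_measurable_LIMSEQ_real)
  fix n :: nat
  have "(\<lambda>t. f (real_of_int \<lceil>real (Suc n) * t\<rceil> / real (Suc n)))
      = (\<lambda>k. f (real_of_int k / real (Suc n))) \<circ> (\<lambda>t. \<lceil>real (Suc n) * t\<rceil>)"
    by auto
  also have "\<dots> \<in> borel_measurable borel"
    by (rule measurable_comp[where N="count_space UNIV"]) auto
  finally show "(\<lambda>t. f (real_of_int \<lceil>real (Suc n) * t\<rceil> / real (Suc n))) \<in> borel_measurable borel" .
next
  fix t :: real
  show "(\<lambda>n. f (real_of_int \<lceil>real (Suc n) * t\<rceil> / real (Suc n))) \<longlonglongrightarrow> f t"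
  proof (rule LIMSEQ_I)
    fix e :: real
    assume "e > 0"
    have "(f \<longlongrightarrow> f t) (at_right t)" using rc[of t] by (simp add: continuous_within)
    then have "eventually (\<lambda>u. dist (f u) (f t) < e) (at_right t)" using \<open>e > 0\<close> by (rule tendstoD)
    then obtain b where b: "b > t" "\<And>u. t < u \<Longrightarrow> u < b \<Longrightarrow> dist (f u) (f t) < e"
      by (auto simp: eventually_at_right_field)
    obtain N :: nat where N: "1 / real (Suc N) < b - t"
      using b(1) by (metis diff_gt_0_iff_gt nat_approx_posE)
    show "\<exists>N. \<forall>n\<ge>N. norm (f (real_of_int \<lceil>real (Suc n) * t\<rceil> / real (Suc n)) - f t) < e"
    proof (intro exI allI impI)
      fix n
      assume "n \<ge> N"
      let ?c = "real_of_int \<lceil>real (Suc n) * t\<rceil> / real (Suc n)"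
      have "real (Suc n) * t \<le> real_of_int \<lceil>real (Suc n) * t\<rceil>" by linarith
      then have c_ge: "t \<le> ?c" by (simp add: field_simps)
      have "real_of_int \<lceil>real (Suc n) * t\<rceil> < real (Suc n) * t + 1" by linarith
      then have "?c < (real (Suc n) * t + 1) / real (Suc n)"
        by (intro divide_strict_right_mono) auto
      also have "\<dots> = t + 1 / real (Suc n)" by (simp only: add_divide_distrib) simp
      finally have "?c < t + 1 / real (Suc n)" .
      moreover have "1 / real (Suc n) \<le> 1 / real (Suc N)" using \<open>n \<ge> N\<close> by (simp add: frac_le)
      ultimately have "?c < b" using N by linarith
      then show "norm (f ?c - f t) < e"
        using b(2)[of ?c] c_ge \<open>e > 0\<close> by (cases "?c = t") (auto simp: dist_real_def)
    qed
  qed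
qed

lemma borel_measurable_left_limit:
  fixes f g :: "real \<Rightarrow> real"
  assumes f: "f \<in> borel_measurable borel" and lim: "\<And>t. (f \<longlongrightarrow> g t) (at_left t)"
  shows "g \<in> borel_measurable borel"
proof (rule borel_measurable_LIMSEQ_real)
  fix n :: nat
  show "(\<lambda>t. f (t - 1 / real (Suc n))) \<in> borel_measurable borel"
    using f by measurable
next
  fix t :: real
  have "filterlim (\<lambda>n. t - 1 / real (Suc n)) (at_left t) sequentially"
    unfolding filterlim_at
  proof
    have "(\<lambda>n. t - 1 / real (Suc n)) \<longlonglongrightarrow> t - 0"
      by (intro tendsto_intros LIMSEQ_Suc[OF lim_const_over_n])
    then show "(\<lambda>n. t - 1 / real (Suc n)) \<longlonglongrightarrow> t" by simp
  qed auto
  then show "(\<lambda>n. f (t - 1 / real (Suc n))) \<longlonglongrightarrow> g t"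
    using lim[of t] by (rule filterlim_compose[rotated])
qed

lemma cadlag_bounded_on_Icc:
  fixes f :: "real \<Rightarrow> real"
  assumes rc: "\<And>t. continuous (at_right t) f" and ll: "\<And>t. \<exists>l. (f \<longlongrightarrow> l) (at_left t)"
  shows "\<exists>B\<ge>0. \<forall>u\<in>{a..b}. \<bar>f u\<bar> \<le> B"
proof -
  have "\<exists>d B. d > 0 \<and> (\<forall>u. dist u t < d \<longrightarrow> \<bar>f u\<bar> \<le> B)" for t
  proof -
    have "(f \<longlongrightarrow> f t) (at_right t)" using rc[of t] by (simp add: continuous_within)
    then have "eventually (\<lambda>u. dist (f u) (f t) < 1) (at_right t)" by (rule tendstoD) simp
    then obtain b1 where b1: "b1 > t" "\<And>u. t < u \<Longrightarrow> u < b1 \<Longrightarrow> dist (f u) (f t) < 1"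
      by (auto simp: eventually_at_right_field)
    obtain l where "(f \<longlongrightarrow> l) (at_left t)" using ll by blast
    then have "eventually (\<lambda>u. dist (f u) l < 1) (at_left t)" by (rule tendstoD) simp
    then obtain b2 where b2: "b2 < t" "\<And>u. b2 < u \<Longrightarrow> u < t \<Longrightarrow> dist (f u) l < 1"
      by (auto simp: eventually_at_left_field)
    show ?thesis
    proof (intro exI conjI allI impI)
      show "min (b1 - t) (t - b2) > 0" using b1 b2 by auto
      fix u
      assume u: "dist u t < min (b1 - t) (t - b2)"
      consider "u = t" | "t < u" | "u < t" by linarith
      then show "\<bar>f u\<bar> \<le> \<bar>f t\<bar> + \<bar>l\<bar> + 1"
      proof cases
        case 2
        then have "dist (f u) (f t) < 1" using u by (intro b1(2)) (auto simp: dist_real_def)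
        then show ?thesis by (auto simp: dist_real_def)
      next
        case 3
        then have "dist (f u) l < 1" using u by (intro b2(2)) (auto simp: dist_real_def)
        then show ?thesis by (auto simp: dist_real_def)
      qed auto
    qed
  qed
  then obtain d B where dB: "\<And>t. d t > 0" "\<And>t u. dist u t < d t \<Longrightarrow> \<bar>f u\<bar> \<le> B t"
    by metis
  obtain T where T: "T \<subseteq> {a..b}" "finite T" "{a..b} \<subseteq> (\<Union>t\<in>T. ball t (d t))"
    by (rule compactE_image[of "{a..b}" "{a..b}" "\<lambda>t. ball t (d t)"]) (use dB in auto)
  show ?thesis
  proof (intro exI conjI ballI)
    fix u
    assume "u \<in> {a..b}"
    then obtain t where t: "t \<in> T" "u \<in> ball t (d t)" using T by blast
    then have "\<bar>f u\<bar> \<le> B t" using dB(2)[of u t] by (simp add: dist_commute)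
    also have "\<dots> \<le> \<bar>B t\<bar>" by simp
    also have "\<dots> \<le> (\<Sum>s\<in>T. \<bar>B s\<bar>)" using t(1) T(2) by (intro member_le_sum) auto
    finally show "\<bar>f u\<bar> \<le> (\<Sum>s\<in>T. \<bar>B s\<bar>)" .
  qed (simp add: sum_nonneg)
qed

lemma bounded_if_continuous_vanishing_outside:
  fixes f :: "real \<Rightarrow> real"
  assumes "continuous_on UNIV f" and "\<forall>u. u \<notin> {a..b} \<longrightarrow> f u = 0"
  shows "\<exists>C\<ge>0. \<forall>u. \<bar>f u\<bar> \<le> C"
proof -
  have "compact (f ` {a..b})"
    by (rule compact_continuous_image) (use assms in \<open>auto intro: continuous_on_subset\<close>)
  then obtain C where C: "\<forall>v\<in>f ` {a..b}. norm v \<le> C"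
    using compact_imp_bounded bounded_iff by metis
  have "\<bar>f u\<bar> \<le> max C 0" for u
    using C assms(2) by (cases "u \<in> {a..b}") force+
  then show ?thesis by (intro exI[of _ "max C 0"]) auto
qed

lemma set_integrable_bounded:
  fixes f :: "'a \<Rightarrow> real"
  assumes "A \<in> sets M" "emeasure M A < \<infinity>" "f \<in> borel_measurable M" "\<forall>u\<in>A. \<bar>f u\<bar> \<le> C"
  shows "set_integrable M A f"
  unfolding set_integrable_def
  by (rule integrableI_bounded_set_indicator[where B=C]) (use assms in auto)

lemma abs_set_integral_le_bound:
  fixes f :: "'a \<Rightarrow> real"
  assumes A: "A \<in> sets M" "emeasure M A < \<infinity>" "f \<in> borel_measurable M" "\<forall>u\<in>A. \<bar>f u\<bar> \<le> C"
  shows "\<bar>LINT u:A|M. f u\<bar> \<le> C * measure M A"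
proof -
  have f: "set_integrable M A f" by (rule set_integrable_bounded[OF A])
  have const: "set_integrable M A (\<lambda>_. c)" for c :: real
    by (rule set_integrable_bounded[where C="\<bar>c\<bar>"]) (use A in auto)
  have fin: "emeasure M A \<noteq> \<infinity>" using A by auto
  have "(LINT u:A|M. f u) \<le> (LINT u:A|M. C)"
    by (rule set_integral_mono[OF f const]) (use A in auto)
  moreover have "(LINT u:A|M. -C) \<le> (LINT u:A|M. f u)"
    by (rule set_integral_mono[OF const f]) (use A in auto)
  ultimately show ?thesis
    using set_integral_const[OF A(1) fin, of C] set_integral_const[OF A(1) fin, of "-C"]
    by (simp add: abs_le_iff mult.commute)
qed

lemma set_integral_nonneg:
  fixes f :: "'a \<Rightarrow> real"
  assumes "\<And>v. v \<in> A \<Longrightarrow> 0 \<le> f v"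
  shows "0 \<le> (LINT v:A|M. f v)"
  unfolding set_lebesgue_integral_def
  by (rule integral_nonneg_AE) (use assms in \<open>auto simp: indicator_def\<close>)

lemma continuous_from_right_extend_left:
  assumes "cadlag_from a f"
  shows "continuous (at_right t) (\<lambda>s. f (max s a))"
proof (cases "a \<le> t")
  case True
  have "eventually (\<lambda>s. f s = f (max s a)) (at_right t)"
    using eventually_at_right_less[of t] by eventually_elim (use True in auto)
  moreover have "(f \<longlongrightarrow> f t) (at_right t)"
    using assms True by (simp add: cadlag_from_def continuous_within)
  ultimately have "((\<lambda>s. f (max s a)) \<longlongrightarrow> f t) (at_right t)"
    by (rule tendsto_cong[THEN iffD1])
  then show ?thesis using True by (simp add: continuous_within)
next
  case False
  then have "eventually (\<lambda>s. f a = f (max s a)) (at_right t)"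
    by (auto simp: eventually_at_right_field intro!: exI[of _ a])
  then have "((\<lambda>s. f (max s a)) \<longlongrightarrow> f a) (at_right t)"
    by (rule tendsto_cong[THEN iffD1]) simp
  then show ?thesis using False by (simp add: continuous_within)
qed

lemma left_limit_extend_left:
  assumes "cadlag_from a f"
  shows "\<exists>l. ((\<lambda>s. f (max s a)) \<longlongrightarrow> l) (at_left t)"
proof (cases "a < t")
  case True
  then obtain l where "(f \<longlongrightarrow> l) (at_left t)"
    using assms unfolding cadlag_from_def by (meson less_imp_le)
  moreover have "eventually (\<lambda>s. f s = f (max s a)) (at_left t)"
    using True by (auto simp: eventually_at_left_field intro!: exI[of _ a])
  ultimately show ?thesis by (blast intro: tendsto_cong[THEN iffD1, rotated])
next
  case False
  then have "eventually (\<lambda>s. f a = f (max s a)) (at_left t)"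
    by (auto simp: eventually_at_left_field intro!: exI[of _ "t - 1"])
  then have "((\<lambda>s. f (max s a)) \<longlongrightarrow> f a) (at_left t)"
    by (rule tendsto_cong[THEN iffD1]) simp
  then show ?thesis by blast
qed

lemma left_lim_extend_left:
  assumes "a < t"
  shows "left_lim (\<lambda>s. f (max s a)) t = left_lim f t"
  unfolding left_lim_def
  by (rule Lim_cong) (use assms in \<open>auto simp: eventually_at_left_field intro!: exI[of _ a]\<close>)

lemma real_continuous_induct:
  fixes a t :: real
  assumes "a \<le> t"
    and at_end: "\<And>s. a \<le> s \<Longrightarrow> \<forall>u\<in>{a..<s}. P u \<Longrightarrow> P s"
    and beyond: "\<And>s. a \<le> s \<Longrightarrow> \<forall>u\<in>{a..s}. P u \<Longrightarrow> \<exists>d>0. \<forall>u\<in>{s..s+d}. P u"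
  shows "P t"
proof (rule ccontr)
  assume "\<not> P t"
  define bad where "bad = {s \<in> {a..t}. \<not> P s}"
  define \<tau> where "\<tau> = Inf bad"
  have "t \<in> bad" using \<open>a \<le> t\<close> \<open>\<not> P t\<close> by (simp add: bad_def)
  have lower: "\<tau> \<le> s" if "s \<in> bad" for s
    unfolding \<tau>_def by (rule cInf_lower[OF that]) (auto simp: bad_def bdd_below_def)
  have "a \<le> \<tau>"
    unfolding \<tau>_def using \<open>t \<in> bad\<close> by (intro cInf_greatest) (auto simp: bad_def)
  have before: "\<forall>u\<in>{a..<\<tau>}. P u"
  proof
    fix u
    assume u: "u \<in> {a..<\<tau>}"
    show "P u"
    proof (rule ccontr)
      assume "\<not> P u"
      then have "u \<in> bad" using u lower[OF \<open>t \<in> bad\<close>] by (simp add: bad_def)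
      then show False using lower u by fastforce
    qed
  qed
  moreover have "P \<tau>" using at_end \<open>a \<le> \<tau>\<close> before by blast
  ultimately have "\<forall>u\<in>{a..\<tau>}. P u" by (auto simp: le_less)
  then obtain d where d: "d > 0" "\<forall>u\<in>{\<tau>..\<tau>+d}. P u"
    using beyond \<open>a \<le> \<tau>\<close> by blast
  have "\<tau> + d \<le> Inf bad"
  proof (rule cInf_greatest)
    show "bad \<noteq> {}" using \<open>t \<in> bad\<close> by blast
    fix s
    assume "s \<in> bad"
    then have "s \<notin> {\<tau>..\<tau>+d}" using d(2) by (auto simp: bad_def)
    then show "\<tau> + d \<le> s" using lower[OF \<open>s \<in> bad\<close>] by simp
  qed
  then show False using d(1) by (simp add: \<tau>_def)
qed

locale delay_equation_path =
  fixes p q r eta c_mu c_nu :: real and f_mu f_nu S x :: "real \<Rightarrow> real"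
  assumes p_nonneg: "p \<ge> 0" and q_nonneg: "q \<ge> 0" and r_eq: "r = max p q"
    and c_nu_nonneg: "c_nu \<ge> 0"
    and f_mu_cont: "continuous_on UNIV f_mu" and f_mu_nonneg: "\<forall>u. f_mu u \<ge> 0"
    and f_mu_support: "\<forall>u. u \<notin> {-p..0} \<longrightarrow> f_mu u = 0"
    and f_nu_cont: "continuous_on UNIV f_nu" and f_nu_nonneg: "\<forall>u. f_nu u \<ge> 0"
    and f_nu_support: "\<forall>u. u \<notin> {-q..0} \<longrightarrow> f_nu u = 0"
    and eta_pos: "eta > 0" and c_mu_gt: "c_mu > (LINT u|lborel. \<bar>f_mu u\<bar>)"
    and cadlag: "cadlag_from (-r) x"
    and solves: "solves_path eta c_mu c_nu f_mu f_nu p q S x"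
    and initial: "\<forall>u\<in>{-r..0}. x u \<ge> eta / (c_mu - (LINT u|lborel. \<bar>f_mu u\<bar>))"
begin

definition "f_mu_L1 = (LINT u|lborel. \<bar>f_mu u\<bar>)"
definition "x_low = eta / (c_mu - f_mu_L1)"

text \<open>\<open>x\<close> is only cadlag on \<open>[-r, \<infinity>)\<close>; frozen at \<open>x (-r)\<close> to the left, it becomes cadlag on
  the whole line, and the equation never looks at times before \<open>-r\<close>.\<close>
definition "x_ext t = x (max t (-r))"
definition "x_left = left_lim x_ext"

abbreviation "mu_S \<equiv> interval_measure S"
definition "xi_mu s = (LINT u:{-p..0}|lborel. f_mu u * x_ext (s + u))"
definition "xi_nu s = (LINT v:{s-q<..s}|mu_S. f_nu (v - s) * x_left v)"
definition "drift s = eta - c_mu * x_ext s + xi_mu s + xi_nu s"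

lemma r_ge: "-r \<le> -p" "-r \<le> -q" "-r \<le> 0"
  using r_eq p_nonneg q_nonneg by auto

lemma x_ext_eq: "-r \<le> t \<Longrightarrow> x_ext t = x t"
  by (simp add: x_ext_def max_def)

lemma continuous_from_right_x_ext: "continuous (at_right t) x_ext"
  unfolding x_ext_def[abs_def] by (rule continuous_from_right_extend_left[OF cadlag])

lemma tendsto_x_left: "(x_ext \<longlongrightarrow> x_left t) (at_left t)"
proof -
  obtain l where "(x_ext \<longlongrightarrow> l) (at_left t)"
    unfolding x_ext_def[abs_def] using left_limit_extend_left[OF cadlag] by blast
  then show ?thesis by (simp add: x_left_def left_lim_def tendsto_Lim)
qed

lemma left_lim_x_eq: "-r < v \<Longrightarrow> left_lim x v = x_left v"
  unfolding x_left_def x_ext_def[abs_def] by (simp add: left_lim_extend_left)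

lemma x_ext_bounded: "\<exists>B\<ge>0. \<forall>u\<in>{a..b}. \<bar>x_ext u\<bar> \<le> B"
  by (rule cadlag_bounded_on_Icc[OF continuous_from_right_x_ext]) (use tendsto_x_left in blast)

lemma x_left_bounded: "\<exists>B\<ge>0. \<forall>v\<in>{a<..b}. \<bar>x_left v\<bar> \<le> B"
proof -
  obtain B where B: "B \<ge> 0" "\<forall>u\<in>{a..b}. \<bar>x_ext u\<bar> \<le> B" using x_ext_bounded by blast
  have "\<bar>x_left v\<bar> \<le> B" if v: "v \<in> {a<..b}" for v
  proof (rule tendsto_upperbound)
    show "((\<lambda>u. \<bar>x_ext u\<bar>) \<longlongrightarrow> \<bar>x_left v\<bar>) (at_left v)" by (intro tendsto_intros tendsto_x_left)
    have "eventually (\<lambda>u. a < u \<and> u < v) (at_left v)"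
      using v by (auto simp: eventually_at_left_field)
    then show "eventually (\<lambda>u. \<bar>x_ext u\<bar> \<le> B) (at_left v)"
      by eventually_elim (use B v in auto)
  qed simp
  then show ?thesis using B(1) by blast
qed

lemma x_left_lower_bound:
  assumes "a < v" and "\<forall>u\<in>{a..<v}. c \<le> x_ext u"
  shows "c \<le> x_left v"
proof (rule tendsto_lowerbound[OF tendsto_x_left])
  have "eventually (\<lambda>u. a < u \<and> u < v) (at_left v)"
    using assms(1) by (auto simp: eventually_at_left_field)
  then show "eventually (\<lambda>u. c \<le> x_ext u) (at_left v)"
    by eventually_elim (use assms in auto)
qed simp

lemma x_ext_measurable[measurable]: "x_ext \<in> borel_measurable borel"
  by (rule borel_measurable_continuous_from_right[OF continuous_from_right_x_ext])

lemma x_left_measurable[measurable]: "x_left \<in> borel_measurable borel"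
  by (rule borel_measurable_left_limit[OF x_ext_measurable tendsto_x_left])

lemma f_mu_measurable[measurable]: "f_mu \<in> borel_measurable borel"
  by (rule borel_measurable_continuous_onI[OF f_mu_cont])

lemma f_nu_measurable[measurable]: "f_nu \<in> borel_measurable borel"
  by (rule borel_measurable_continuous_onI[OF f_nu_cont])

lemma xi_mu_measurable[measurable]: "xi_mu \<in> borel_measurable borel"
proof -
  have "(\<lambda>s. \<integral>u. indicator {-p..0} u *\<^sub>R (f_mu u * x_ext (s + u)) \<partial>lborel) \<in> borel_measurable borel"
    by (rule lborel.borel_measurable_lebesgue_integral) measurable
  then show ?thesis by (simp add: xi_mu_def[abs_def] set_lebesgue_integral_def)
qed

lemma xi_nu_measurable[measurable]: "xi_nu \<in> borel_measurable borel"
proof -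
  have "(\<lambda>s. \<integral>v. (if s - q < v \<and> v \<le> s then f_nu (v - s) * x_left v else 0) \<partial>mu_S)
      \<in> borel_measurable borel"
  proof (rule sigma_finite_measure.borel_measurable_lebesgue_integral[OF sigma_finite_interval_measure_any])
    have sets_eq: "sets (borel \<Otimes>\<^sub>M mu_S) = sets (borel \<Otimes>\<^sub>M (borel :: real measure))"
      by (intro sets_pair_measure_cong) auto
    show "(\<lambda>(s, v). if s - q < v \<and> v \<le> s then f_nu (v - s) * x_left v else 0)
        \<in> borel_measurable (borel \<Otimes>\<^sub>M mu_S)"
      unfolding measurable_cong_sets[OF sets_eq refl] by measurable
  qed
  moreover have "(\<integral>v. (if s - q < v \<and> v \<le> s then f_nu (v - s) * x_left v else 0) \<partial>mu_S) = xi_nu s"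
    for s
    unfolding xi_nu_def set_lebesgue_integral_def
    by (rule Bochner_Integration.integral_cong) (auto simp: indicator_def)
  ultimately show ?thesis by simp
qed

lemma drift_measurable[measurable]: "drift \<in> borel_measurable borel"
  unfolding drift_def[abs_def] by measurable

lemma f_mu_bounded: "\<exists>C\<ge>0. \<forall>u. \<bar>f_mu u\<bar> \<le> C"
  by (rule bounded_if_continuous_vanishing_outside[OF f_mu_cont f_mu_support])

lemma f_nu_bounded: "\<exists>C\<ge>0. \<forall>u. \<bar>f_nu u\<bar> \<le> C"
  by (rule bounded_if_continuous_vanishing_outside[OF f_nu_cont f_nu_support])

lemma f_mu_L1_eq: "f_mu_L1 = (LINT u:{-p..0}|lborel. f_mu u)"
  unfolding f_mu_L1_def set_lebesgue_integral_def
  by (rule Bochner_Integration.integral_cong) (use f_mu_nonneg f_mu_support in \<open>auto simp: indicator_def\<close>)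

lemma f_mu_L1_nonneg: "0 \<le> f_mu_L1"
  unfolding f_mu_L1_eq using f_mu_nonneg by (intro set_integral_nonneg) auto

lemma f_mu_L1_less: "f_mu_L1 < c_mu"
  using c_mu_gt by (simp add: f_mu_L1_def)

lemma x_low_pos: "0 < x_low"
  using f_mu_L1_less eta_pos by (simp add: x_low_def)

lemma eta_eq: "eta = (c_mu - f_mu_L1) * x_low"
  using f_mu_L1_less by (simp add: x_low_def)

lemma x_low_le_initial: "-r \<le> u \<Longrightarrow> u \<le> 0 \<Longrightarrow> x_low \<le> x_ext u"
  using initial by (simp add: x_low_def f_mu_L1_def x_ext_eq)

lemma xi_mu_integrand_bounded:
  assumes "\<forall>u\<in>{s-p..s}. \<bar>x_ext u\<bar> \<le> B" and "F \<ge> 0" "\<forall>u. \<bar>f_mu u\<bar> \<le> F" and "u \<in> {-p..0}"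
  shows "\<bar>f_mu u * x_ext (s + u)\<bar> \<le> F * B"
  unfolding abs_mult using assms by (intro mult_mono) auto

lemma xi_mu_integrand_integrable: "set_integrable lborel {-p..0} (\<lambda>u. f_mu u * x_ext (s + u))"
proof -
  obtain B where B: "\<forall>u\<in>{s-p..s}. \<bar>x_ext u\<bar> \<le> B" using x_ext_bounded by blast
  obtain F where F: "F \<ge> 0" "\<forall>u. \<bar>f_mu u\<bar> \<le> F" using f_mu_bounded by blast
  show ?thesis
  proof (rule set_integrable_bounded[where C="F * B"])
    show "\<forall>u\<in>{-p..0}. \<bar>f_mu u * x_ext (s + u)\<bar> \<le> F * B"
      using xi_mu_integrand_bounded[OF B F] by blast
  qed (auto simp: emeasure_lborel_Icc_eq)
qed

lemma xi_mu_bounded: "\<exists>C. \<forall>s\<in>{a..b}. \<bar>xi_mu s\<bar> \<le> C"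
proof -
  obtain B where B: "\<forall>u\<in>{a-p..b}. \<bar>x_ext u\<bar> \<le> B" using x_ext_bounded by blast
  obtain F where F: "F \<ge> 0" "\<forall>u. \<bar>f_mu u\<bar> \<le> F" using f_mu_bounded by blast
  have "\<bar>xi_mu s\<bar> \<le> F * B * measure lborel {-p..0}" if s: "s \<in> {a..b}" for s
    unfolding xi_mu_def
  proof (rule abs_set_integral_le_bound)
    have "\<forall>u\<in>{s-p..s}. \<bar>x_ext u\<bar> \<le> B" using B s by auto
    then show "\<forall>u\<in>{-p..0}. \<bar>f_mu u * x_ext (s + u)\<bar> \<le> F * B"
      using xi_mu_integrand_bounded F by blast
  qed (auto simp: emeasure_lborel_Icc_eq)
  then show ?thesis by blast
qed

lemma xi_nu_bounded: "\<exists>C. \<forall>s\<in>{a..b}. \<bar>xi_nu s\<bar> \<le> C"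
proof -
  obtain B where B: "B \<ge> 0" "\<forall>v\<in>{a-q<..b}. \<bar>x_left v\<bar> \<le> B" using x_left_bounded by blast
  obtain F where F: "F \<ge> 0" "\<forall>u. \<bar>f_nu u\<bar> \<le> F" using f_nu_bounded by blast
  have "\<bar>xi_nu s\<bar> \<le> F * B * measure mu_S {a-q<..b}" if s: "s \<in> {a..b}" for s
  proof -
    have "\<bar>xi_nu s\<bar> \<le> F * B * measure mu_S {s-q<..s}"
      unfolding xi_nu_def
    proof (rule abs_set_integral_le_bound)
      show "\<forall>v\<in>{s-q<..s}. \<bar>f_nu (v - s) * x_left v\<bar> \<le> F * B"
        unfolding abs_mult using B F s by (intro ballI mult_mono) auto
    qed (use emeasure_interval_measure_Ioc_finite in auto)
    also have "\<dots> \<le> F * B * measure mu_S {a-q<..b}"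
      using s B(1) F(1) emeasure_interval_measure_Ioc_finite
      by (intro mult_left_mono measure_mono_fmeasurable) (auto simp: fmeasurable_def)
    finally show ?thesis .
  qed
  then show ?thesis by blast
qed

lemma drift_bounded: "\<exists>C\<ge>0. \<forall>s\<in>{a..b}. \<bar>drift s\<bar> \<le> C"
proof -
  obtain B where B: "B \<ge> 0" "\<forall>s\<in>{a..b}. \<bar>x_ext s\<bar> \<le> B" using x_ext_bounded by blast
  obtain C1 where C1: "\<forall>s\<in>{a..b}. \<bar>xi_mu s\<bar> \<le> C1" using xi_mu_bounded by blast
  obtain C2 where C2: "\<forall>s\<in>{a..b}. \<bar>xi_nu s\<bar> \<le> C2" using xi_nu_bounded by blast
  let ?C = "\<bar>eta\<bar> + \<bar>c_mu\<bar> * B + \<bar>C1\<bar> + \<bar>C2\<bar>"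
  have "\<bar>drift s\<bar> \<le> ?C" if "s \<in> {a..b}" for s
  proof -
    have "\<bar>c_mu * x_ext s\<bar> \<le> \<bar>c_mu\<bar> * B"
      unfolding abs_mult using B that by (intro mult_left_mono) auto
    moreover have "\<bar>xi_mu s\<bar> \<le> \<bar>C1\<bar>" "\<bar>xi_nu s\<bar> \<le> \<bar>C2\<bar>" using C1 C2 that by force+
    ultimately show ?thesis unfolding drift_def by arith
  qed
  moreover have "0 \<le> ?C" using B(1) by simp
  ultimately show ?thesis by (intro exI[of _ ?C]) simp
qed

lemma drift_integrable: "set_integrable lborel {a..b} drift"
proof -
  obtain C where "\<forall>s\<in>{a..b}. \<bar>drift s\<bar> \<le> C" using drift_bounded by blast
  then show ?thesis by (intro set_integrable_bounded) (auto simp: emeasure_lborel_Icc_eq)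
qed

lemma x_left_integrable: "set_integrable mu_S {a<..b} x_left"
proof -
  obtain C where "\<forall>v\<in>{a<..b}. \<bar>x_left v\<bar> \<le> C" using x_left_bounded by blast
  then show ?thesis
    by (intro set_integrable_bounded) (use emeasure_interval_measure_Ioc_finite in auto)
qed

lemma abs_integral_drift_le:
  assumes "\<forall>u\<in>{s..t}. \<bar>drift u\<bar> \<le> C" and "s \<le> t"
  shows "\<bar>LINT u:{s<..t}|lborel. drift u\<bar> \<le> C * (t - s)"
  using abs_set_integral_le_bound[of "{s<..t}" lborel drift C] assms by simp

lemma x_ext_integral_equation:
  assumes "0 \<le> t"
  shows "x_ext t = x_ext 0 + (LINT s:{0..t}|lborel. drift s) + c_nu * (LINT v:{0<..t}|mu_S. x_left v)"
proof -
  have "(LINT s:{0..t}|lborel. eta - c_mu * x s + xi_term f_mu f_nu p q S x s)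
      = (LINT s:{0..t}|lborel. drift s)"
  proof (rule set_lebesgue_integral_cong, simp, intro allI impI)
    fix s
    assume s: "s \<in> {0..t}"
    have "(LINT u:{-p..0}|lborel. f_mu u * x (s + u)) = xi_mu s"
      unfolding xi_mu_def by (rule set_lebesgue_integral_cong) (use s r_ge in \<open>auto simp: x_ext_eq\<close>)
    moreover have "stieltjes_int S (s - q) s (\<lambda>v. f_nu (v - s) * left_lim x v) = xi_nu s"
      unfolding xi_nu_def stieltjes_int_def
      by (rule set_lebesgue_integral_cong) (use s r_ge in \<open>auto simp: left_lim_x_eq\<close>)
    ultimately show "eta - c_mu * x s + xi_term f_mu f_nu p q S x s = drift s"
      using s r_ge by (simp add: xi_term_def drift_def x_ext_eq)
  qed
  moreover have "stieltjes_int S 0 t (left_lim x) = (LINT v:{0<..t}|mu_S. x_left v)"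
    unfolding stieltjes_int_def
    by (rule set_lebesgue_integral_cong) (use r_ge in \<open>auto simp: left_lim_x_eq\<close>)
  moreover have "x t = x 0 + (LINT s:{0..t}|lborel. eta - c_mu * x s + xi_term f_mu f_nu p q S x s)
      + c_nu * stieltjes_int S 0 t (left_lim x)"
    using solves assms unfolding solves_path_def by blast
  ultimately show ?thesis
    using assms r_ge by (simp add: x_ext_eq)
qed

lemma x_ext_increment:
  assumes "0 \<le> s" "s \<le> t"
  shows "x_ext t - x_ext s = (LINT u:{s<..t}|lborel. drift u) + c_nu * (LINT v:{s<..t}|mu_S. x_left v)"
proof -
  have "{0..t} = {0..s} \<union> {s<..t}" and "{0<..t} = {0<..s} \<union> {s<..t}" using assms by auto
  moreover have "set_integrable lborel {s<..t} drift"
    by (rule set_integrable_subset[OF drift_integrable[of s t]]) auto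
  ultimately have "(LINT u:{0..t}|lborel. drift u) = (LINT u:{0..s}|lborel. drift u) + (LINT u:{s<..t}|lborel. drift u)"
    and "(LINT v:{0<..t}|mu_S. x_left v) = (LINT v:{0<..s}|mu_S. x_left v) + (LINT v:{s<..t}|mu_S. x_left v)"
    by (auto intro!: set_integral_Un drift_integrable x_left_integrable)
  then show ?thesis
    using x_ext_integral_equation[of t] x_ext_integral_equation[of s] assms by (simp add: distrib_left)
qed

lemma integral_drift_le_increment:
  assumes "0 \<le> s" "s \<le> t" and "\<forall>v\<in>{s<..t}. 0 \<le> x_left v"
  shows "(LINT u:{s<..t}|lborel. drift u) \<le> x_ext t - x_ext s"
proof -
  have "0 \<le> (LINT v:{s<..t}|mu_S. x_left v)" using assms(3) by (intro set_integral_nonneg) auto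
  then show ?thesis using x_ext_increment[OF assms(1,2)] c_nu_nonneg by simp
qed

lemma xi_mu_lower_bound:
  assumes "\<forall>u\<in>{s-p..s}. c \<le> x_ext u"
  shows "f_mu_L1 * c \<le> xi_mu s"
proof -
  have "f_mu_L1 * c = (LINT u:{-p..0}|lborel. f_mu u * c)" by (simp add: f_mu_L1_eq)
  also have "\<dots> \<le> xi_mu s"
    unfolding xi_mu_def
  proof (rule set_integral_mono[OF _ xi_mu_integrand_integrable])
    obtain F where "\<forall>u. \<bar>f_mu u\<bar> \<le> F" using f_mu_bounded by blast
    then have "set_integrable lborel {-p..0} f_mu"
      by (intro set_integrable_bounded[where C=F]) (auto simp: emeasure_lborel_Icc_eq)
    then show "set_integrable lborel {-p..0} (\<lambda>u. f_mu u * c)" by simp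
    fix u
    assume "u \<in> {-p..0}"
    then show "f_mu u * c \<le> f_mu u * x_ext (s + u)"
      using assms f_mu_nonneg by (intro mult_left_mono) auto
  qed
  finally show ?thesis .
qed

lemma xi_nu_nonneg:
  assumes "\<forall>v\<in>{s-q<..s}. 0 \<le> x_left v"
  shows "0 \<le> xi_nu s"
  unfolding xi_nu_def using assms f_nu_nonneg by (intro set_integral_nonneg) auto

lemma drift_lower_bound:
  assumes "\<forall>w\<in>{u-p..u}. c \<le> x_ext w" and "\<forall>v\<in>{u-q<..u}. 0 \<le> x_left v"
  shows "c_mu * (x_low - x_ext u) - f_mu_L1 * (x_low - c) \<le> drift u"
  using xi_mu_lower_bound[OF assms(1)] xi_nu_nonneg[OF assms(2)] eta_eq
  by (simp add: drift_def algebra_simps)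

lemma lower_bound_at_endpoint:
  assumes "0 < \<tau>" and below: "\<forall>u\<in>{-r..<\<tau>}. x_low \<le> x_ext u"
  shows "x_low \<le> x_ext \<tau>"
proof -
  obtain C where C: "\<forall>s\<in>{0..\<tau>}. \<bar>drift s\<bar> \<le> C" using drift_bounded by blast
  have "x_low - C * (\<tau> - s) \<le> x_ext \<tau>" if s: "0 \<le> s" "s < \<tau>" for s
  proof -
    have "\<forall>v\<in>{s<..\<tau>}. 0 \<le> x_left v"
      using below s r_ge x_low_pos
      by (force intro: order_trans[OF less_imp_le[OF x_low_pos] x_left_lower_bound[of "-r"]])
    then have "(LINT u:{s<..\<tau>}|lborel. drift u) \<le> x_ext \<tau> - x_ext s"
      using s by (intro integral_drift_le_increment) auto
    moreover have "\<bar>LINT u:{s<..\<tau>}|lborel. drift u\<bar> \<le> C * (\<tau> - s)"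
      using C s by (intro abs_integral_drift_le) auto
    moreover have "x_low \<le> x_ext s" using below s r_ge by auto
    ultimately show ?thesis by linarith
  qed
  then have "eventually (\<lambda>s. x_low - C * (\<tau> - s) \<le> x_ext \<tau>) (at_left \<tau>)"
    using \<open>0 < \<tau>\<close> by (auto simp: eventually_at_left_field intro!: exI[of _ 0])
  moreover have "((\<lambda>s. x_low - C * (\<tau> - s)) \<longlongrightarrow> x_low - C * (\<tau> - \<tau>)) (at_left \<tau>)"
    by (intro tendsto_intros)
  ultimately show ?thesis by (intro tendsto_upperbound) auto
qed

lemma integral_drift_ge_while_below:
  assumes "0 \<le> \<tau>" "\<tau> \<le> \<sigma>" "\<sigma> \<le> t"
    and below: "\<forall>u\<in>{-r..\<tau>}. x_low \<le> x_ext u"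
    and E: "0 \<le> E" "\<forall>w\<in>{\<tau>..t}. x_low - E \<le> x_ext w"
    and under: "\<forall>u\<in>{\<sigma><..t}. x_ext u < x_low"
    and left_nonneg: "\<forall>v\<in>{-r<..t}. 0 \<le> x_left v"
  shows "- (f_mu_L1 * E * (t - \<sigma>)) \<le> (LINT u:{\<sigma><..t}|lborel. drift u)"
proof -
  have "(LINT u:{\<sigma><..t}|lborel. - (f_mu_L1 * E)) \<le> (LINT u:{\<sigma><..t}|lborel. drift u)"
  proof (rule set_integral_mono)
    show "set_integrable lborel {\<sigma><..t} (\<lambda>_. - (f_mu_L1 * E))"
      by (rule set_integrable_bounded[where C="\<bar>f_mu_L1 * E\<bar>"]) (use assms(3) in auto)
    show "set_integrable lborel {\<sigma><..t} drift"
      by (rule set_integrable_subset[OF drift_integrable[of \<sigma> t]]) auto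
    fix u
    assume u: "u \<in> {\<sigma><..t}"
    have "x_low - E \<le> x_ext w" if w: "w \<in> {u-p..u}" for w
    proof (cases "w \<le> \<tau>")
      case True
      then have "x_low \<le> x_ext w" using below w u assms(1,2) r_ge by auto
      then show ?thesis using E(1) by linarith
    next
      case False
      then show ?thesis using E(2) w u by auto
    qed
    moreover have "\<forall>v\<in>{u-q<..u}. 0 \<le> x_left v" using left_nonneg u assms(1,2) r_ge by auto
    ultimately have "c_mu * (x_low - x_ext u) - f_mu_L1 * (x_low - (x_low - E)) \<le> drift u"
      by (intro drift_lower_bound) auto
    moreover have "0 \<le> c_mu * (x_low - x_ext u)"
      using under u f_mu_L1_less f_mu_L1_nonneg by (simp add: less_imp_le)
    ultimately show "- (f_mu_L1 * E) \<le> drift u" by simp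
  qed
  then show ?thesis
    using set_integral_const[of "{\<sigma><..t}" lborel "- (f_mu_L1 * E)"] assms(3) by (simp add: ac_simps)
qed

text \<open>The contraction step: after the last time \<open>sigma \<le> t\<close> at which \<open>x \<ge> x_low\<close>, the drift
  is at least \<open>-f_mu_L1 * E\<close>, so over a window of length \<open>d\<close> the deficit \<open>E\<close> is halved.\<close>
lemma lower_bound_deficit_halves:
  assumes "0 \<le> \<tau>" and d: "f_mu_L1 * d \<le> 1/2"
    and below: "\<forall>u\<in>{-r..\<tau>}. x_low \<le> x_ext u"
    and left_nonneg: "\<forall>v\<in>{-r<..\<tau>+d}. 0 \<le> x_left v"
    and E: "0 \<le> E" "\<forall>w\<in>{\<tau>..\<tau>+d}. x_low - E \<le> x_ext w"
    and t: "t \<in> {\<tau>..\<tau>+d}"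
  shows "x_low - E/2 \<le> x_ext t"
proof -
  define St where "St = {s \<in> {\<tau>..t}. x_low \<le> x_ext s}"
  define \<sigma> where "\<sigma> = Sup St"
  have "\<tau> \<in> St" using below t \<open>0 \<le> \<tau>\<close> r_ge by (auto simp: St_def)
  have bdd: "bdd_above St" by (auto simp: St_def bdd_above_def)
  have in_St: "\<tau> \<le> s \<and> s \<le> \<sigma> \<and> x_low \<le> x_ext s" if "s \<in> St" for s
    using that cSup_upper[OF that bdd] by (auto simp: St_def \<sigma>_def)
  have \<sigma>: "\<tau> \<le> \<sigma>" "\<sigma> \<le> t"
    using in_St[OF \<open>\<tau> \<in> St\<close>] \<open>\<tau> \<in> St\<close> by (auto simp: \<sigma>_def St_def intro!: cSup_least)
  have after_\<sigma>: "x_ext u < x_low" if "\<sigma> < u" "u \<le> t" for u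
    using that \<sigma> in_St[of u] by (force simp: St_def)
  obtain C where C: "C \<ge> 0" "\<forall>s\<in>{0..t}. \<bar>drift s\<bar> \<le> C" using drift_bounded by blast
  have tail: "- (f_mu_L1 * E * (t - \<sigma>)) \<le> (LINT u:{\<sigma><..t}|lborel. drift u)"
    using \<open>0 \<le> \<tau>\<close> \<sigma> below E t left_nonneg after_\<sigma>
    by (intro integral_drift_ge_while_below) auto
  have near_\<sigma>: "x_low - E/2 - C * (\<sigma> - s) \<le> x_ext t" if s: "s \<in> St" for s
  proof -
    have s_le: "\<tau> \<le> s" "s \<le> \<sigma>" "x_low \<le> x_ext s" using in_St[OF s] by auto
    have "(LINT u:{s<..t}|lborel. drift u)
        = (LINT u:{s<..\<sigma>}|lborel. drift u) + (LINT u:{\<sigma><..t}|lborel. drift u)"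
    proof -
      have "{s<..t} = {s<..\<sigma>} \<union> {\<sigma><..t}" using s_le \<sigma> by auto
      moreover have "set_integrable lborel {s<..\<sigma>} drift" "set_integrable lborel {\<sigma><..t} drift"
        using s_le \<sigma> by (auto intro: set_integrable_subset[OF drift_integrable[of s t]])
      ultimately show ?thesis
        using set_integral_Un[of "{s<..\<sigma>}" "{\<sigma><..t}" lborel drift] by auto
    qed
    moreover have "\<bar>LINT u:{s<..\<sigma>}|lborel. drift u\<bar> \<le> C * (\<sigma> - s)"
      using C s_le \<sigma> \<open>0 \<le> \<tau>\<close> by (intro abs_integral_drift_le) auto
    moreover have "(LINT u:{s<..t}|lborel. drift u) \<le> x_ext t - x_ext s"
      using s_le \<sigma> \<open>0 \<le> \<tau>\<close> left_nonneg t r_ge by (intro integral_drift_le_increment) auto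
    moreover have "f_mu_L1 * E * (t - \<sigma>) \<le> E/2"
    proof -
      have "f_mu_L1 * E * (t - \<sigma>) \<le> f_mu_L1 * E * d"
        using f_mu_L1_nonneg E t \<sigma> by (intro mult_left_mono) auto
      also have "\<dots> \<le> E/2" using mult_left_mono[OF d E(1)] by (simp add: ac_simps)
      finally show ?thesis .
    qed
    ultimately show ?thesis using tail s_le by linarith
  qed
  show ?thesis
  proof (rule field_le_epsilon)
    fix e :: real
    assume "0 < e"
    then have "\<sigma> - e / (C + 1) < Sup St" using C(1) by (simp add: \<sigma>_def)
    then obtain s where s: "s \<in> St" "\<sigma> - e / (C + 1) < s"
      using \<open>\<tau> \<in> St\<close> by (auto elim: less_cSupE)
    have "C * (\<sigma> - s) \<le> C * (e / (C + 1))" using s C(1) by (intro mult_left_mono) auto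
    also have "\<dots> \<le> e" using C(1) \<open>0 < e\<close> by (simp add: field_simps)
    finally show "x_low - E/2 \<le> x_ext t + e"
      using near_\<sigma>[OF s(1)] by linarith
  qed
qed

lemma half_lower_bound_beyond_endpoint:
  assumes "0 \<le> \<tau>" and below: "\<forall>u\<in>{-r..\<tau>}. x_low \<le> x_ext u"
  shows "\<exists>b>\<tau>. \<forall>u\<in>{-r..<b}. x_low/2 \<le> x_ext u"
proof -
  have "(x_ext \<longlongrightarrow> x_ext \<tau>) (at_right \<tau>)"
    using continuous_from_right_x_ext[of \<tau>] by (simp add: continuous_within)
  then have "eventually (\<lambda>u. dist (x_ext u) (x_ext \<tau>) < x_low/2) (at_right \<tau>)"
    using x_low_pos by (intro tendstoD) auto
  then obtain b where b: "\<tau> < b" "\<And>u. \<tau> < u \<Longrightarrow> u < b \<Longrightarrow> dist (x_ext u) (x_ext \<tau>) < x_low/2"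
    by (auto simp: eventually_at_right_field)
  have "x_low/2 \<le> x_ext u" if u: "-r \<le> u" "u < b" for u
  proof (cases "u \<le> \<tau>")
    case True
    then have "x_low \<le> x_ext u" using below u by auto
    then show ?thesis using x_low_pos by linarith
  next
    case False
    then have "\<bar>x_ext u - x_ext \<tau>\<bar> < x_low/2" using b(2)[of u] u by (simp add: dist_real_def)
    moreover have "x_low \<le> x_ext \<tau>" using below \<open>0 \<le> \<tau>\<close> r_ge by auto
    ultimately show ?thesis by linarith
  qed
  then show ?thesis using b(1) by auto
qed

lemma lower_bound_beyond_endpoint:
  assumes "0 \<le> \<tau>" and below: "\<forall>u\<in>{-r..\<tau>}. x_low \<le> x_ext u"
  shows "\<exists>d>0. \<forall>u\<in>{\<tau>..\<tau>+d}. x_low \<le> x_ext u"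
proof -
  obtain b where "\<tau> < b" and half: "\<forall>u\<in>{-r..<b}. x_low/2 \<le> x_ext u"
    using half_lower_bound_beyond_endpoint[OF assms] by blast
  define d where "d = min ((b - \<tau>) / 2) (1 / (2 * (f_mu_L1 + 1)))"
  have "0 < d" using \<open>\<tau> < b\<close> f_mu_L1_nonneg by (simp add: d_def)
  have "d \<le> (b - \<tau>) / 2" unfolding d_def by (rule min.cobounded1)
  then have "\<tau> + d < b" using \<open>\<tau> < b\<close> by (simp add: field_simps)
  have "f_mu_L1 * d \<le> 1/2"
  proof -
    have "f_mu_L1 * d \<le> f_mu_L1 * (1 / (2 * (f_mu_L1 + 1)))"
      using f_mu_L1_nonneg by (intro mult_left_mono) (auto simp: d_def)
    also have "\<dots> \<le> 1/2" using f_mu_L1_nonneg by (simp add: divide_simps)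
    finally show ?thesis .
  qed
  have left_nonneg: "\<forall>v\<in>{-r<..\<tau>+d}. 0 \<le> x_left v"
  proof
    fix v
    assume v: "v \<in> {-r<..\<tau>+d}"
    have "x_low/2 \<le> x_left v"
      using v half \<open>\<tau> + d < b\<close> by (intro x_left_lower_bound[of "-r"]) auto
    then show "0 \<le> x_left v" using x_low_pos by linarith
  qed
  have approx: "\<forall>w\<in>{\<tau>..\<tau>+d}. x_low - (x_low/2) * (1/2)^n \<le> x_ext w" for n
  proof (induction n)
    case 0
    show ?case using half \<open>0 \<le> \<tau>\<close> r_ge \<open>\<tau> + d < b\<close> by auto
  next
    case (Suc n)
    have "x_low - (x_low/2) * (1/2)^n / 2 \<le> x_ext w" if "w \<in> {\<tau>..\<tau>+d}" for w
      by (rule lower_bound_deficit_halves[OF \<open>0 \<le> \<tau>\<close> \<open>f_mu_L1 * d \<le> 1/2\<close> below left_nonneg _ Suc that])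
        (use x_low_pos in simp)
    then show ?case by simp
  qed
  have "x_low \<le> x_ext w" if "w \<in> {\<tau>..\<tau>+d}" for w
  proof -
    have "(\<lambda>n. x_low - (x_low/2) * (1/2)^n) \<longlonglongrightarrow> x_low - (x_low/2) * 0"
      by (intro tendsto_intros LIMSEQ_realpow_zero) auto
    then have "(\<lambda>n. x_low - (x_low/2) * (1/2)^n) \<longlonglongrightarrow> x_low" by simp
    then show ?thesis by (rule tendsto_upperbound) (use approx that in auto)
  qed
  then show ?thesis using \<open>0 < d\<close> by blast
qed

lemma lower_bound:
  assumes "-r \<le> t"
  shows "x_low \<le> x t"
proof -
  have "x_low \<le> x_ext t"
  proof (rule real_continuous_induct[OF assms])
    fix s
    assume s: "-r \<le> s" and before: "\<forall>u\<in>{-r..<s}. x_low \<le> x_ext u"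
    show "x_low \<le> x_ext s"
    proof (cases "s \<le> 0")
      case True
      then show ?thesis using s x_low_le_initial by simp
    next
      case False
      then show ?thesis using before by (intro lower_bound_at_endpoint) auto
    qed
  next
    fix s
    assume s: "-r \<le> s" and up_to: "\<forall>u\<in>{-r..s}. x_low \<le> x_ext u"
    show "\<exists>d>0. \<forall>u\<in>{s..s+d}. x_low \<le> x_ext u"
    proof (cases "s < 0")
      case True
      then show ?thesis using s x_low_le_initial by (intro exI[of _ "-s"]) auto
    next
      case False
      then show ?thesis using up_to by (intro lower_bound_beyond_endpoint) auto
    qed
  qed
  then show ?thesis using assms by (simp add: x_ext_eq)
qed

end

theorem theorem4p14:
  fixes M :: "'a measure" and F :: "real \<Rightarrow> 'a measure"
    and L X :: "'a \<Rightarrow> real \<Rightarrow> real"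
    and p q r eta c_mu c_nu :: real and f_mu f_nu :: "real \<Rightarrow> real"
  assumes "prob_space M"
    and "p \<ge> 0" and "q \<ge> 0" and r_def: "r = max p q"
    and "usual_filtration M F (-r)"
    and "levy_process M F (-r) L" and "centered_proc M (-r) L"
    and "integrable M (\<lambda>\<omega>. (L \<omega> 1) ^ 4)"
    and "c_nu > 0"
    and "continuous_on UNIV f_mu" and "\<forall>u. f_mu u \<ge> 0" and "\<forall>u. u \<notin> {-p..0} \<longrightarrow> f_mu u = 0"
    and "continuous_on UNIV f_nu" and "\<forall>u. f_nu u \<ge> 0" and "\<forall>u. u \<notin> {-q..0} \<longrightarrow> f_nu u = 0"
    \<comment> \<open>initial condition: adapted to the natural filtration of L, square-integrable supremum\<close>
    and "\<forall>u\<in>{-r..0}. (\<lambda>\<omega>. X \<omega> u) \<in> borel_measurable (nat_filtration M L (-r) u)"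
    \<comment> \<open>X is the solution: adapted, cadlag, E sup_{[-r,t]} X^2 < infinity, solves the equation a.s.\<close>
    and "adapted_proc F (-r) X"
    and "\<forall>\<omega>\<in>space M. cadlag_from (-r) (X \<omega>)"
    and "\<forall>t\<ge>0. (\<integral>\<^sup>+\<omega>. ennreal ((SUP u\<in>{-r..t}. \<bar>X \<omega> u\<bar>)\<^sup>2) \<partial>M) < \<infinity>"
    and "AE \<omega> in M. solves_path eta c_mu c_nu f_mu f_nu p q (sq_jump_sum (-r) (L \<omega>)) (X \<omega>)"
    \<comment> \<open>positivity hypotheses\<close>
    and "eta > 0"
    and "c_mu > (LINT u|lborel. \<bar>f_mu u\<bar>)"
    and "AE \<omega> in M. \<forall>u\<in>{-r..0}. X \<omega> u \<ge> eta / (c_mu - (LINT u|lborel. \<bar>f_mu u\<bar>))"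
  shows "\<forall>t>0. AE \<omega> in M. X \<omega> t \<ge> eta / (c_mu - (LINT u|lborel. \<bar>f_mu u\<bar>))"
proof (intro allI impI)
  fix t :: real
  assume "t > 0"
  from assms(20) assms(23) AE_space
  show "AE \<omega> in M. X \<omega> t \<ge> eta / (c_mu - (LINT u|lborel. \<bar>f_mu u\<bar>))"
  proof eventually_elim
    case (elim \<omega>)
    interpret delay_equation_path p q r eta c_mu c_nu f_mu f_nu "sq_jump_sum (-r) (L \<omega>)" "X \<omega>"
      using assms elim by unfold_locales auto
    show ?case
      using lower_bound[of t] \<open>t > 0\<close> r_ge by (simp add: x_low_def f_mu_L1_def)
  qed
qed

end
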